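(* Let $\Gamma\subset\mathbb{C}^n$ be a discrete subgroup with $\mathrm{rank}_{\mathbb{C}}\Gamma=n$, and let $X=\mathbb{C}^n/\Gamma$ have a period matrix of the form $$P=\begin{pmatrix}0 & I_m & T\\ I_{n-m} & R_1 & R_2\end{pmatrix},\qquad \det(\mathrm{Im}(T))\neq 0,$$ with $R_1,R_2$ real matrices. Suppose that the real $(n-m,2m)$-matrix $(R_1\ R_2)$ does not satisfy the irrationality condition, so that $X$ has the Remmert–Morimoto decomposition $X\cong(\mathbb{C}^* )^q\times Y$ with $q\ge 1$ and $Y=\mathbb{C}^r/\Lambda$ a toroidal group. Let $\mathbb{T}:=\mathbb{C}^m_\Gamma/\Lambda_{\mathbb{T}}$, where $\Lambda_{\mathbb{T}}$ is the lattice generated by the columns of $(I_m\ T)$. If $\mathbb{T}$ is an abelian variety, then $Y$ is a quasi-abelian variety of kind $0$.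
   Context: $\mathrm{rank}_{\mathbb{C}}\Gamma$ is the complex dimension of the complex linear span of $\Gamma$. $\mathbb{R}^{n+m}_\Gamma$ denotes the real linear span of $\Gamma$, and $\mathbb{C}^m_\Gamma=\mathbb{R}^{n+m}_\Gamma\cap\sqrt{-1}\,\mathbb{R}^{n+m}_\Gamma$ is the maximal complex linear subspace contained in it (here, in the coordinates of the period matrix, the span of the last $m$ coordinate directions paired with $(I_m\ T)$). A toroidal group is a connected commutative complex Lie group $\mathbb{C}^r/\Lambda$ on which every holomorphic function is constant; $\mathbb{C}^n/\Gamma$ with the period matrix above is toroidal iff $(R_1\ R_2)$ satisfies the irrationality condition. For a toroidal group $Y=\mathbb{C}^r/\Lambda$ with $\mathrm{rank}\,\Lambda=r+m$, an ample Riemann form is a hermitian form $\mathcal{H}$ on $\mathbb{C}^r$ which is positive definite on the maximal complex subspace $\mathbb{C}^m_\Lambda$ of the real span $\mathbb{R}^{r+m}_\Lambda$ of $\Lambda$ and whose imaginary part is $\mathbb{Z}$-valued on $\Lambda\times\Lambda$; it is of kind $k$ if the restriction of $\mathrm{Im}\,\mathcal{H}$ to $\mathbb{R}^{r+m}_\Lambda\times\mathbb{R}^{r+m}_\Lambda$ has rank $2(m+k)$. $Y$ is a quasi-abelian variety of kind $0$ if it admits an ample Riemann form of kind $0$. *)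

theory Defs
  imports "HOL-Analysis.Analysis"
begin

definition clinear_vec :: "(complex^'a \<Rightarrow> complex^'b) \<Rightarrow> bool" where
  "clinear_vec f \<longleftrightarrow> (\<forall>x y. f (x + y) = f x + f y) \<and> (\<forall>c x. f (c *s x) = c *s f x)"

definition holomorphic_vec :: "(complex^'r \<Rightarrow> complex) \<Rightarrow> bool" where
  "holomorphic_vec f \<longleftrightarrow>
     (\<forall>z. \<exists>L. (f has_derivative L) (at z) \<and> (\<forall>c v. L (c *s v) = c * L v))"

definition cspan_vec :: "(complex^'n) set \<Rightarrow> (complex^'n) set" where
  "cspan_vec S = {(\<Sum>v\<in>F. c v *s v) | F c. finite F \<and> F \<subseteq> S}"

definition discrete_subgroup :: "(complex^'n) set \<Rightarrow> bool" where
  "discrete_subgroup G \<longleftrightarrow> 0 \<in> G \<and> (\<forall>x\<in>G. \<forall>y\<in>G. x - y \<in> G) \<and>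
     (\<exists>e>0. \<forall>g\<in>G. g \<noteq> 0 \<longrightarrow> e \<le> norm g)"

text \<open>Toroidal group C^r / L: every holomorphic function on the quotient is constant,
  i.e. every L-periodic holomorphic function on C^r is constant.\<close>
definition toroidal :: "(complex^'r) set \<Rightarrow> bool" where
  "toroidal L \<longleftrightarrow> (\<forall>f. holomorphic_vec f \<and> (\<forall>z. \<forall>l\<in>L. f (z + l) = f z)
        \<longrightarrow> (\<exists>c. \<forall>z. f z = c))"

definition hermitian_form :: "(complex^'r \<Rightarrow> complex^'r \<Rightarrow> complex) \<Rightarrow> bool" where
  "hermitian_form H \<longleftrightarrow>
     (\<forall>u v w. H (u + v) w = H u w + H v w) \<and>
     (\<forall>c v w. H (c *s v) w = c * H v w) \<and>
     (\<forall>v w. H v w = cnj (H w v))"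

definition max_complex_subspace :: "(complex^'r) set \<Rightarrow> (complex^'r) set" where
  "max_complex_subspace L = span L \<inter> (\<lambda>v. \<i> *s v) ` span L"

definition im_rank_on :: "(complex^'r \<Rightarrow> complex^'r \<Rightarrow> complex) \<Rightarrow> (complex^'r) set \<Rightarrow> nat" where
  "im_rank_on H L = dim (span L) - dim {v \<in> span L. \<forall>w\<in>span L. Im (H v w) = 0}"

text \<open>Ample Riemann form of kind k for the toroidal group C^r/L
  (rank of Im H on R_L equals 2(m+k) where 2m = real dim of C^m_L).\<close>
definition ample_riemann_form_kind ::
  "(complex^'r \<Rightarrow> complex^'r \<Rightarrow> complex) \<Rightarrow> (complex^'r) set \<Rightarrow> nat \<Rightarrow> bool" where
  "ample_riemann_form_kind H L k \<longleftrightarrow>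
     hermitian_form H \<and>
     (\<forall>v\<in>max_complex_subspace L. v \<noteq> 0 \<longrightarrow> Re (H v v) > 0) \<and>
     (\<forall>a\<in>L. \<forall>b\<in>L. Im (H a b) \<in> \<int>) \<and>
     im_rank_on H L = dim (max_complex_subspace L) + 2 * k"

definition quasi_abelian_kind0 :: "(complex^'r) set \<Rightarrow> bool" where
  "quasi_abelian_kind0 L \<longleftrightarrow> (\<exists>H. ample_riemann_form_kind H L 0)"

text \<open>Abelian variety C^m/L (L a lattice): admits a Riemann form, i.e. a positive definite
  hermitian form whose imaginary part is integral on L.\<close>
definition abelian_variety :: "(complex^'m) set \<Rightarrow> bool" where
  "abelian_variety L \<longleftrightarrow> (\<exists>H. hermitian_form H \<and> (\<forall>v. v \<noteq> 0 \<longrightarrow> Re (H v v) > 0) \<and>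
       (\<forall>a\<in>L. \<forall>b\<in>L. Im (H a b) \<in> \<int>))"

definition irrationality_condition :: "real^'c^'k \<Rightarrow> bool" where
  "irrationality_condition R \<longleftrightarrow>
     (\<forall>\<sigma>::int^'k. \<sigma> \<noteq> 0 \<longrightarrow> (\<exists>j. (\<Sum>i\<in>UNIV. of_int (\<sigma>$i) * R$i$j) \<notin> \<int>))"

definition block_R :: "real^'m^'k \<Rightarrow> real^'m^'k \<Rightarrow> real^('m + 'm)^'k" where
  "block_R R1 R2 = (\<chi> i j. case j of Inl a \<Rightarrow> R1$i$a | Inr b \<Rightarrow> R2$i$b)"

text \<open>The lattice Gamma in C^n = C^('m + 'k) spanned (over Z) by the columns of
  P = ((0, I_m, T), (I_(n-m), R1, R2)); coordinates Inl a are the first m rows,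
  coordinates Inr i the last n-m rows.\<close>
definition period_lattice ::
  "complex^'m^'m \<Rightarrow> real^'m^'k \<Rightarrow> real^'m^'k \<Rightarrow> (complex^('m + 'k)) set" where
  "period_lattice T R1 R2 =
    {(\<Sum>j\<in>UNIV. of_int (a j) *s (\<chi> idx. case idx of Inl _ \<Rightarrow> 0 | Inr i \<Rightarrow> (if i = j then 1 else 0)))
     + (\<Sum>l\<in>UNIV. of_int (b l) *s (\<chi> idx. case idx of Inl p \<Rightarrow> (if p = l then 1 else 0)
                                                 | Inr i \<Rightarrow> complex_of_real (R1$i$l)))
     + (\<Sum>l\<in>UNIV. of_int (c l) *s (\<chi> idx. case idx of Inl p \<Rightarrow> T$p$l
                                                 | Inr i \<Rightarrow> complex_of_real (R2$i$l)))
     | (a :: 'k \<Rightarrow> int) (b :: 'm \<Rightarrow> int) (c :: 'm \<Rightarrow> int). True}"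

definition torus_lattice :: "complex^'m^'m \<Rightarrow> (complex^'m) set" where
  "torus_lattice T =
    {(\<Sum>l\<in>UNIV. of_int (b l) *s (\<chi> p. if p = l then 1 else 0))
     + (\<Sum>l\<in>UNIV. of_int (c l) *s (\<chi> p. T$p$l))
     | (b :: 'm \<Rightarrow> int) (c :: 'm \<Rightarrow> int). True}"

text \<open>Kernel lattice of (C^*)^q x C^r/L, viewed as C^(q+r) modulo
  (2 pi i Z)^q x L (C^* = C / 2 pi i Z via exp).\<close>
definition split_lattice :: "(complex^'r) set \<Rightarrow> (complex^('q::finite + 'r)) set" where
  "split_lattice L = {v. (\<forall>i. \<exists>z::int. v$(Inl i) = 2 * of_real pi * \<i> * of_int z)
                          \<and> (\<chi> j. v$(Inr j)) \<in> L}"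

text \<open>Isomorphism of connected commutative complex Lie groups C^n/G and C^N/G':
  a complex-linear isomorphism of the universal covers carrying G onto G'.\<close>
definition quotient_iso :: "(complex^'a) set \<Rightarrow> (complex^'b) set \<Rightarrow> bool" where
  "quotient_iso G G' \<longleftrightarrow> (\<exists>\<phi>. bij \<phi> \<and> clinear_vec \<phi> \<and> \<phi> ` G = G')"

end

theory Submission
  imports Defs
begin

(* A Riemann form of the abelian variety C^m / Lambda_T is pulled back along a complex-linear
   map psi : C^r -> C^m.  Under the decomposition isomorphism phi, the maximal complex subspace
   C^m x 0 of the real span of Gamma corresponds to 0 x C^m_Lambda, because the real span of the
   kernel lattice of the factor (C-star)^q is purely imaginary; hence
   psi = pr_(C^m) o phi^-1 o (0 x -) maps C^m_Lambda isomorphically onto C^m and Lambda into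
   Lambda_T.  The pulled-back form H is then positive definite on C^m_Lambda with Im H integral
   on Lambda, and since ker psi lies in the kernel of Im H, C^m_Lambda is a complement of that
   kernel in the real span of Lambda: Im H has rank 2m there, so H has kind 0. *)

lemma scaleR_eq_of_real_smult: "c *\<^sub>R (x :: complex^'n) = complex_of_real c *s x"
  by (simp add: vec_eq_iff flip: scaleR_conv_of_real)

lemma clinear_vecD:
  assumes "clinear_vec f"
  shows "f (x + y) = f x + f y" "f (c *s x) = c *s f x"
  using assms unfolding clinear_vec_def by blast+

lemma clinear_vec_imp_linear: "clinear_vec f \<Longrightarrow> linear f"
  by (intro linearI) (simp_all add: clinear_vecD scaleR_eq_of_real_smult)

lemma clinear_vec_compose: "clinear_vec f \<Longrightarrow> clinear_vec g \<Longrightarrow> clinear_vec (f \<circ> g)"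
  unfolding clinear_vec_def by simp

lemma clinear_vec_inv:
  assumes "bij f" "clinear_vec f"
  shows "clinear_vec (inv f)"
proof -
  have "inv f (x + y) = inv f x + inv f y" "inv f (c *s x) = c *s inv f x" for x y c
    using assms(1) by (metis bij_inv_eq_iff clinear_vecD[OF assms(2)])+
  then show ?thesis unfolding clinear_vec_def by blast
qed

lemma hermitian_formD:
  assumes "hermitian_form H"
  shows "H (u + v) w = H u w + H v w" "H (c *s v) w = c * H v w" "H v w = cnj (H w v)"
  using assms unfolding hermitian_form_def by blast+

lemma hermitian_form_smult_right:
  assumes "hermitian_form H"
  shows "H v (c *s w) = cnj c * H v w"
proof -
  have "H v (c *s w) = cnj (c * H w v)"
    using hermitian_formD(2,3)[OF assms] by metis
  then show ?thesis
    using hermitian_formD(3)[OF assms, of v w] by simp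
qed

lemma hermitian_form_scaleR_left:
  assumes "hermitian_form H"
  shows "H (c *\<^sub>R v) w = c *\<^sub>R H v w"
  by (simp add: hermitian_formD(2)[OF assms] scaleR_eq_of_real_smult scaleR_conv_of_real)

lemma hermitian_form_zero_left:
  assumes "hermitian_form H"
  shows "H 0 w = 0"
  using hermitian_formD(2)[OF assms, of 0 0 w] by simp

lemma hermitian_form_diff_left:
  assumes "hermitian_form H"
  shows "H (u - v) w = H u w - H v w"
  by (metis add_diff_cancel_right' diff_add_cancel hermitian_formD(1)[OF assms])

lemma hermitian_form_Im_i_smult_self:
  assumes "hermitian_form H"
  shows "Im (H v (\<i> *s v)) = - Re (H v v)"
proof -
  have "Im (H v v) = 0"
    using arg_cong[OF hermitian_formD(3)[OF assms, of v v], of Im] by simp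
  then show ?thesis by (simp add: hermitian_form_smult_right[OF assms])
qed

lemma hermitian_form_pullback:
  assumes "hermitian_form H" "clinear_vec f"
  shows "hermitian_form (\<lambda>u v. H (f u) (f v))"
  unfolding hermitian_form_def
  by (simp add: hermitian_formD(1,2)[OF assms(1)] clinear_vecD[OF assms(2)])
    (metis hermitian_formD(3)[OF assms(1)])

lemma max_complex_subspace_subset_span: "max_complex_subspace L \<subseteq> span L"
  unfolding max_complex_subspace_def by blast

lemma subspace_max_complex_subspace: "subspace (max_complex_subspace L)"
  unfolding max_complex_subspace_def
proof (rule subspace_inter)
  have "linear (\<lambda>v::complex^'n. \<i> *s v)"
    by (intro linearI) (auto simp: scaleR_eq_of_real_smult vec_eq_iff algebra_simps)
  then show "subspace ((\<lambda>v. \<i> *s v) ` span L)"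
    by (rule linear_subspace_image) simp
qed simp

lemma i_smult_in_span_if_in_max_complex_subspace:
  assumes "v \<in> max_complex_subspace L"
  shows "\<i> *s v \<in> span L"
proof -
  obtain v' where "v' \<in> span L" "v = \<i> *s v'"
    using assms unfolding max_complex_subspace_def by blast
  moreover have "\<i> *s (\<i> *s v') = - v'" by (simp add: vec_eq_iff)
  ultimately show ?thesis by (simp add: span_neg)
qed

lemma max_complex_subspace_linear_image:
  fixes f :: "complex^'a \<Rightarrow> complex^'b"
  assumes "inj f" "clinear_vec f"
  shows "max_complex_subspace (f ` G) = f ` max_complex_subspace G"
proof -
  have "(\<lambda>v. \<i> *s v) ` f ` span G = f ` (\<lambda>v. \<i> *s v) ` span G"
    by (simp add: image_image clinear_vecD[OF assms(2)])
  then show ?thesis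
    unfolding max_complex_subspace_def
    by (simp add: span_linear_image clinear_vec_imp_linear[OF assms(2)] image_Int[OF assms(1)])
qed

lemma im_rank_on_eq_dim_max_complex_subspace:
  assumes herm: "hermitian_form H"
    and pos: "\<And>v. v \<in> max_complex_subspace L \<Longrightarrow> v \<noteq> 0 \<Longrightarrow> Re (H v v) > 0"
    and supplement: "\<And>v. v \<in> span L \<Longrightarrow> \<exists>u\<in>max_complex_subspace L. \<forall>w. H v w = H u w"
  shows "im_rank_on H L = dim (max_complex_subspace L)"
proof -
  define M where "M = max_complex_subspace L"
  define K where "K = {v \<in> span L. \<forall>w\<in>span L. Im (H v w) = 0}"
  have "subspace K"
    unfolding subspace_def K_def
    by (auto simp: span_zero span_add span_scale hermitian_formD(1)[OF herm]
        hermitian_form_scaleR_left[OF herm] hermitian_form_zero_left[OF herm])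
  have "subspace M"
    unfolding M_def by (rule subspace_max_complex_subspace)
  have "K \<inter> M = {0}"
  proof (rule ccontr)
    assume "K \<inter> M \<noteq> {0}"
    moreover have "0 \<in> K \<inter> M" using \<open>subspace K\<close> \<open>subspace M\<close> subspace_0 by blast
    ultimately obtain v where v: "v \<in> K" "v \<in> M" "v \<noteq> 0" by blast
    then have "Im (H v (\<i> *s v)) = 0"
      unfolding K_def M_def using i_smult_in_span_if_in_max_complex_subspace by blast
    then show False
      using hermitian_form_Im_i_smult_self[OF herm, of v] pos[OF v(2,3)[unfolded M_def]] by simp
  qed
  have "{a + b |a b. a \<in> K \<and> b \<in> M} = span L"
  proof
    show "{a + b |a b. a \<in> K \<and> b \<in> M} \<subseteq> span L"
      using max_complex_subspace_subset_span span_add unfolding K_def M_def by blast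
    show "span L \<subseteq> {a + b |a b. a \<in> K \<and> b \<in> M}"
    proof
      fix v assume v: "v \<in> span L"
      then obtain u where u: "u \<in> M" "\<forall>w. H v w = H u w"
        using supplement unfolding M_def by blast
      then have "v - u \<in> K"
        unfolding K_def M_def using v max_complex_subspace_subset_span
        by (auto simp: hermitian_form_diff_left[OF herm] intro: span_diff)
      then show "v \<in> {a + b |a b. a \<in> K \<and> b \<in> M}"
        using u(1) by (metis (mono_tags, lifting) CollectI diff_add_cancel)
    qed
  qed
  then have "dim (span L) = dim K + dim M"
    using dim_sums_Int[OF \<open>subspace K\<close> \<open>subspace M\<close>] \<open>K \<inter> M = {0}\<close> by simp
  then show ?thesis
    unfolding im_rank_on_def K_def[symmetric] M_def by simp
qed

lemma quasi_abelian_kind0_pullback: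
  fixes f :: "complex^'r \<Rightarrow> complex^'m"
  assumes "abelian_variety L'" "clinear_vec f" "f ` L \<subseteq> L'"
    and "inj_on f (max_complex_subspace L)" "f ` max_complex_subspace L = UNIV"
  shows "quasi_abelian_kind0 L"
proof -
  obtain H where herm: "hermitian_form H" and pos: "\<And>v. v \<noteq> 0 \<Longrightarrow> Re (H v v) > 0"
    and int: "\<forall>a\<in>L'. \<forall>b\<in>L'. Im (H a b) \<in> \<int>"
    using assms(1) unfolding abelian_variety_def by blast
  define H' where "H' u v = H (f u) (f v)" for u v
  have herm': "hermitian_form H'"
    unfolding H'_def using herm assms(2) by (rule hermitian_form_pullback)
  have pos': "Re (H' v v) > 0" if "v \<in> max_complex_subspace L" "v \<noteq> 0" for v
  proof -
    have "f 0 = 0" "0 \<in> max_complex_subspace L"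
      using clinear_vecD(2)[OF assms(2), of 0 0] subspace_max_complex_subspace subspace_0 by auto
    then have "f v \<noteq> 0"
      using that assms(4) by (metis inj_on_eq_iff)
    then show ?thesis unfolding H'_def by (rule pos)
  qed
  have "\<exists>u\<in>max_complex_subspace L. \<forall>w. H' v w = H' u w" for v
    unfolding H'_def using assms(5) by (metis UNIV_I imageE)
  then have "im_rank_on H' L = dim (max_complex_subspace L)"
    using im_rank_on_eq_dim_max_complex_subspace[OF herm' pos'] by blast
  moreover have "\<forall>a\<in>L. \<forall>b\<in>L. Im (H' a b) \<in> \<int>"
    unfolding H'_def using int assms(3) by blast
  ultimately have "ample_riemann_form_kind H' L 0"
    unfolding ample_riemann_form_kind_def using herm' pos' by simp
  then show ?thesis unfolding quasi_abelian_kind0_def by blast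
qed

definition vec_Inl_part :: "'a^('m::finite + 'k::finite) \<Rightarrow> 'a^'m" where
  "vec_Inl_part z = (\<chi> l. z $ Inl l)"

definition vec_Inr_part :: "'a^('m::finite + 'k::finite) \<Rightarrow> 'a^'k" where
  "vec_Inr_part z = (\<chi> j. z $ Inr j)"

definition vec_of_Inl :: "'a^'m \<Rightarrow> ('a::zero)^('m::finite + 'k::finite)" where
  "vec_of_Inl x = (\<chi> i. case i of Inl l \<Rightarrow> x $ l | Inr _ \<Rightarrow> 0)"

definition vec_of_Inr :: "'a^'k \<Rightarrow> ('a::zero)^('m::finite + 'k::finite)" where
  "vec_of_Inr y = (\<chi> i. case i of Inl _ \<Rightarrow> 0 | Inr j \<Rightarrow> y $ j)"

lemma vec_Inl_part_vec_of_Inl [simp]: "vec_Inl_part (vec_of_Inl x) = x"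
  by (simp add: vec_Inl_part_def vec_of_Inl_def vec_eq_iff)

lemma vec_Inr_part_vec_of_Inr [simp]: "vec_Inr_part (vec_of_Inr y) = y"
  by (simp add: vec_Inr_part_def vec_of_Inr_def vec_eq_iff)

lemma vec_of_Inr_component [simp]:
  "vec_of_Inr y $ Inl l = 0" "vec_of_Inr y $ Inr j = y $ j"
  by (simp_all add: vec_of_Inr_def)

lemma vec_of_Inl_component [simp]:
  "vec_of_Inl x $ Inl l = x $ l" "vec_of_Inl x $ Inr j = 0"
  by (simp_all add: vec_of_Inl_def)

lemma vec_of_Inl_vec_Inl_part:
  assumes "\<And>j. z $ Inr j = 0"
  shows "vec_of_Inl (vec_Inl_part z) = z"
  unfolding vec_eq_iff
proof
  fix i show "vec_of_Inl (vec_Inl_part z) $ i = z $ i"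
    using assms by (cases i) (simp_all add: vec_Inl_part_def)
qed

lemma vec_of_Inr_vec_Inr_part:
  assumes "\<And>l. z $ Inl l = 0"
  shows "vec_of_Inr (vec_Inr_part z) = z"
  unfolding vec_eq_iff
proof
  fix i show "vec_of_Inr (vec_Inr_part z) $ i = z $ i"
    using assms by (cases i) (simp_all add: vec_Inr_part_def)
qed

lemma clinear_vec_vec_Inl_part: "clinear_vec vec_Inl_part"
  by (simp add: clinear_vec_def vec_Inl_part_def vec_eq_iff)

lemma clinear_vec_vec_of_Inr: "clinear_vec vec_of_Inr"
  by (simp add: clinear_vec_def vec_of_Inr_def vec_eq_iff split: sum.split)

lemma vec_of_Inr_in_split_lattice: "a \<in> L \<Longrightarrow> vec_of_Inr a \<in> split_lattice L"
  unfolding split_lattice_def by (auto intro: exI[of _ 0] simp flip: vec_Inr_part_def)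

lemma span_split_lattice_subset:
  "span (split_lattice L) \<subseteq> {w. (\<forall>j. Re (w $ Inl j) = 0) \<and> vec_Inr_part w \<in> span L}"
proof (rule span_minimal)
  show "split_lattice L \<subseteq> {w. (\<forall>j. Re (w $ Inl j) = 0) \<and> vec_Inr_part w \<in> span L}"
    unfolding split_lattice_def vec_Inr_part_def
  proof (auto intro: span_base)
    fix x j
    assume "\<forall>i. \<exists>z::int. x $ Inl i = 2 * complex_of_real pi * \<i> * of_int z"
    then obtain z :: int where "x $ Inl j = 2 * complex_of_real pi * \<i> * of_int z" by blast
    then show "Re (x $ Inl j) = 0" by simp
  qed
  have lin: "linear vec_Inr_part"
    by (intro linearI) (simp_all add: vec_Inr_part_def vec_eq_iff)
  show "subspace {w. (\<forall>j. Re (w $ Inl j) = 0) \<and> vec_Inr_part w \<in> span L}"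
    unfolding subspace_def
    by (simp add: linear_0[OF lin] linear_add[OF lin] linear_scale[OF lin] span_zero span_add span_scale)
qed

lemma max_complex_subspace_split_lattice:
  fixes L :: "(complex^'r) set"
  shows "max_complex_subspace (split_lattice L :: (complex^('q::finite + 'r)) set)
    = vec_of_Inr ` max_complex_subspace L"
proof (rule subset_antisym)
  let ?S = "split_lattice L :: (complex^('q + 'r)) set"
  show "max_complex_subspace ?S \<subseteq> vec_of_Inr ` max_complex_subspace L"
  proof
    fix w assume "w \<in> max_complex_subspace ?S"
    then obtain w' where w: "w \<in> span ?S" "w' \<in> span ?S" "w = \<i> *s w'"
      unfolding max_complex_subspace_def by blast
    note split_parts = w(1,2)[THEN subsetD[OF span_split_lattice_subset]]
    have "w $ Inl j = 0" for j
      using split_parts by (simp add: w(3) complex_eq_iff)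
    then have "w = vec_of_Inr (vec_Inr_part w)"
      by (simp add: vec_of_Inr_vec_Inr_part)
    moreover have "vec_Inr_part w = \<i> *s vec_Inr_part w'"
      by (simp add: w(3) vec_Inr_part_def vec_eq_iff)
    then have "vec_Inr_part w \<in> max_complex_subspace L"
      using split_parts unfolding max_complex_subspace_def by blast
    ultimately show "w \<in> vec_of_Inr ` max_complex_subspace L" by blast
  qed
  have "vec_of_Inr ` span L = span (vec_of_Inr ` L :: (complex^('q + 'r)) set)"
    by (simp add: span_linear_image clinear_vec_imp_linear[OF clinear_vec_vec_of_Inr])
  also have "\<dots> \<subseteq> span ?S"
    by (intro span_mono image_subsetI vec_of_Inr_in_split_lattice)
  finally have span_image: "vec_of_Inr ` span L \<subseteq> span ?S" .
  show "vec_of_Inr ` max_complex_subspace L \<subseteq> max_complex_subspace ?S"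
  proof (rule image_subsetI)
    fix v assume "v \<in> max_complex_subspace L"
    then obtain v' where v: "v \<in> span L" "v' \<in> span L" "v = \<i> *s v'"
      unfolding max_complex_subspace_def by blast
    then have "vec_of_Inr v = \<i> *s vec_of_Inr v'"
      by (simp add: clinear_vecD(2)[OF clinear_vec_vec_of_Inr])
    then show "vec_of_Inr v \<in> max_complex_subspace ?S"
      unfolding max_complex_subspace_def using span_image v(1,2) by auto
  qed
qed

lemma period_lattice_generators:
  fixes T :: "complex^'m^'m" and R1 R2 :: "real^'m^'k"
  shows
  "vec_of_Inr (axis j 1) \<in> period_lattice T R1 R2"
  "vec_of_Inl (axis l 1) + vec_of_Inr (\<chi> i. complex_of_real (R1$i$l)) \<in> period_lattice T R1 R2"
  "vec_of_Inl (column l T) + vec_of_Inr (\<chi> i. complex_of_real (R2$i$l)) \<in> period_lattice T R1 R2"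
proof -
  have indicator_smult: "(of_int (if P then 1 else 0) :: complex) *s v = (if P then v else 0)"
    for P and v :: "complex^('m + 'k)"
    by simp
  show "vec_of_Inr (axis j 1) \<in> period_lattice T R1 R2"
    unfolding period_lattice_def
    by (rule CollectI, rule exI[of _ "\<lambda>j'. if j' = j then 1 else 0"], rule exI[of _ "\<lambda>_. 0"],
        rule exI[of _ "\<lambda>_. 0"])
      (simp add: indicator_smult vec_eq_iff axis_def split: sum.split)
  show "vec_of_Inl (axis l 1) + vec_of_Inr (\<chi> i. complex_of_real (R1$i$l)) \<in> period_lattice T R1 R2"
    unfolding period_lattice_def
    by (rule CollectI, rule exI[of _ "\<lambda>_. 0"], rule exI[of _ "\<lambda>l'. if l' = l then 1 else 0"],
        rule exI[of _ "\<lambda>_. 0"])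
      (simp add: indicator_smult vec_eq_iff axis_def split: sum.split)
  show "vec_of_Inl (column l T) + vec_of_Inr (\<chi> i. complex_of_real (R2$i$l)) \<in> period_lattice T R1 R2"
    unfolding period_lattice_def
    by (rule CollectI, rule exI[of _ "\<lambda>_. 0"], rule exI[of _ "\<lambda>_. 0"],
        rule exI[of _ "\<lambda>l'. if l' = l then 1 else 0"])
      (simp add: indicator_smult vec_eq_iff column_def split: sum.split)
qed

lemma vec_of_Inl_in_span_period_lattice:
  fixes T :: "complex^'m^'m" and R1 R2 :: "real^'m^'k"
  assumes "det (\<chi> i j. Im (T$i$j)) \<noteq> 0"
  shows "vec_of_Inl x \<in> span (period_lattice T R1 R2)"
proof -
  have "surj (\<lambda>v. (\<chi> i j. Im (T$i$j)) *v v)"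
    using assms invertible_det_nz invertible_right_inverse matrix_right_invertible_surjective
    by blast
  then obtain \<gamma> where \<gamma>: "(\<chi> i j. Im (T$i$j)) *v \<gamma> = (\<chi> p. Im (x $ p))"
    by (metis surjD)
  \<comment> \<open>\<gamma> weights the T-columns to get the imaginary part right, \<beta> weights the unit columns to
    correct the real part, and \<alpha> weights the columns e_j to cancel the lower block\<close>
  define \<beta> where "\<beta> = (\<chi> p. Re (x $ p) - (\<Sum>l\<in>UNIV. \<gamma>$l * Re (T$p$l)))"
  define \<alpha> where "\<alpha> = (\<chi> i. - ((\<Sum>l\<in>UNIV. \<beta>$l * R1$i$l) + (\<Sum>l\<in>UNIV. \<gamma>$l * R2$i$l)))"
  define E :: "'k \<Rightarrow> complex^('m + 'k)" where "E j = vec_of_Inr (axis j 1)" for j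
  define B :: "'m \<Rightarrow> complex^('m + 'k)"
    where "B l = vec_of_Inl (axis l 1) + vec_of_Inr (\<chi> i. complex_of_real (R1$i$l))" for l
  define C :: "'m \<Rightarrow> complex^('m + 'k)"
    where "C l = vec_of_Inl (column l T) + vec_of_Inr (\<chi> i. complex_of_real (R2$i$l))" for l
  have "vec_of_Inl x = (\<Sum>j\<in>UNIV. \<alpha>$j *\<^sub>R E j) + (\<Sum>l\<in>UNIV. \<beta>$l *\<^sub>R B l) + (\<Sum>l\<in>UNIV. \<gamma>$l *\<^sub>R C l)"
    unfolding vec_eq_iff
  proof
    fix idx
    show "vec_of_Inl x $ idx = ((\<Sum>j\<in>UNIV. \<alpha>$j *\<^sub>R E j) + (\<Sum>l\<in>UNIV. \<beta>$l *\<^sub>R B l)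
        + (\<Sum>l\<in>UNIV. \<gamma>$l *\<^sub>R C l)) $ idx"
    proof (cases idx)
      case (Inl p)
      have "(\<Sum>l\<in>UNIV. \<gamma>$l * Im (T$p$l)) = Im (x $ p)"
        using arg_cong[OF \<gamma>, of "\<lambda>v. v $ p"] by (simp add: matrix_vector_mult_def mult.commute)
      then show ?thesis
        unfolding Inl
        by (simp add: E_def B_def C_def \<beta>_def axis_def column_def complex_eq_iff Re_sum Im_sum
            if_distrib[of Re] if_distrib[of Im] if_distrib[of "\<lambda>c. _ * c"] cong: if_cong)
    next
      case (Inr i)
      then show ?thesis
        by (simp add: E_def B_def C_def \<alpha>_def axis_def complex_eq_iff Re_sum Im_sum
            if_distrib[of Re] if_distrib[of Im] if_distrib[of "\<lambda>c. _ * c"] cong: if_cong)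
    qed
  qed
  then show ?thesis
    by (simp add: E_def B_def C_def span_add span_sum span_scale span_base period_lattice_generators)
qed

lemma span_period_lattice_subset:
  fixes T :: "complex^'m^'m" and R1 R2 :: "real^'m^'k"
  shows "span (period_lattice T R1 R2) \<subseteq> {x. \<forall>i. Im (x $ Inr i) = 0}"
proof (rule span_minimal)
  show "period_lattice T R1 R2 \<subseteq> {x. \<forall>i. Im (x $ Inr i) = 0}"
    unfolding period_lattice_def by (auto simp: Im_sum if_distrib[of Im] cong: if_cong)
  show "subspace {x :: complex^('m + 'k). \<forall>i. Im (x $ Inr i) = 0}"
    unfolding subspace_def by simp
qed

lemma max_complex_subspace_period_lattice:
  fixes T :: "complex^'m^'m" and R1 R2 :: "real^'m^'k"
  assumes "det (\<chi> i j. Im (T$i$j)) \<noteq> 0"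
  shows "max_complex_subspace (period_lattice T R1 R2) = range vec_of_Inl"
proof (rule subset_antisym)
  show "max_complex_subspace (period_lattice T R1 R2) \<subseteq> range vec_of_Inl"
  proof
    fix z assume "z \<in> max_complex_subspace (period_lattice T R1 R2)"
    then obtain z' where z: "z \<in> span (period_lattice T R1 R2)"
      "z' \<in> span (period_lattice T R1 R2)" "z = \<i> *s z'"
      unfolding max_complex_subspace_def by blast
    have "z $ Inr i = 0" for i
      using z(1,2)[THEN subsetD[OF span_period_lattice_subset]] by (simp add: z(3) complex_eq_iff)
    then have "z = vec_of_Inl (vec_Inl_part z)"
      by (simp add: vec_of_Inl_vec_Inl_part)
    then show "z \<in> range vec_of_Inl" by blast
  qed
  show "range vec_of_Inl \<subseteq> max_complex_subspace (period_lattice T R1 R2)"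
  proof (rule image_subsetI)
    fix x :: "complex^'m"
    have "vec_of_Inl x = \<i> *s vec_of_Inl (- \<i> *s x)"
      by (simp add: vec_eq_iff vec_of_Inl_def split: sum.split)
    then show "vec_of_Inl x \<in> max_complex_subspace (period_lattice T R1 R2)"
      unfolding max_complex_subspace_def
      using vec_of_Inl_in_span_period_lattice[OF assms] by auto
  qed
qed

lemma vec_Inl_part_period_lattice_subset:
  "vec_Inl_part ` period_lattice T R1 R2 \<subseteq> torus_lattice T"
  unfolding period_lattice_def torus_lattice_def
  by (auto simp: vec_Inl_part_def vec_eq_iff) blast

lemma decomposition_torus_projection:
  fixes T :: "complex^'m^'m" and R1 R2 :: "real^'m^'k" and \<Lambda> :: "(complex^'r) set"
    and \<phi> :: "complex^('m + 'k) \<Rightarrow> complex^('q::finite + 'r)"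
  assumes imT: "det (\<chi> i j. Im (T$i$j)) \<noteq> 0"
    and "bij \<phi>" "clinear_vec \<phi>" and \<phi>_lattice: "\<phi> ` period_lattice T R1 R2 = split_lattice \<Lambda>"
  defines "\<psi> \<equiv> vec_Inl_part \<circ> (inv \<phi> \<circ> vec_of_Inr)"
  shows "clinear_vec \<psi>" "\<psi> ` \<Lambda> \<subseteq> torus_lattice T"
    "inj_on \<psi> (max_complex_subspace \<Lambda>)" "\<psi> ` max_complex_subspace \<Lambda> = UNIV"
proof -
  let ?C\<^sub>m = "range (vec_of_Inl :: complex^'m \<Rightarrow> complex^('m + 'k))"
  have "\<phi> ` ?C\<^sub>m = vec_of_Inr ` max_complex_subspace \<Lambda>"
    using max_complex_subspace_linear_image[OF bij_is_inj[OF \<open>bij \<phi>\<close>] \<open>clinear_vec \<phi>\<close>]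
    by (metis \<phi>_lattice max_complex_subspace_period_lattice[OF imT] max_complex_subspace_split_lattice)
  then have max_complex_image: "(inv \<phi> \<circ> vec_of_Inr) ` max_complex_subspace \<Lambda> = ?C\<^sub>m"
    by (metis \<open>bij \<phi>\<close> bij_is_inj image_comp image_inv_f_f)
  show "clinear_vec \<psi>"
    unfolding \<psi>_def
    by (intro clinear_vec_compose clinear_vec_vec_Inl_part clinear_vec_vec_of_Inr
        clinear_vec_inv \<open>bij \<phi>\<close> \<open>clinear_vec \<phi>\<close>)
  have "inv \<phi> ` split_lattice \<Lambda> = period_lattice T R1 R2"
    by (metis \<phi>_lattice \<open>bij \<phi>\<close> bij_is_inj image_inv_f_f)
  then show "\<psi> ` \<Lambda> \<subseteq> torus_lattice T"
    unfolding \<psi>_def image_comp[symmetric]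
    using vec_Inl_part_period_lattice_subset vec_of_Inr_in_split_lattice by blast
  have "inj (inv \<phi> \<circ> vec_of_Inr)"
    by (metis \<open>bij \<phi>\<close> bij_imp_bij_inv bij_is_inj inj_compose inj_on_inverseI vec_Inr_part_vec_of_Inr)
  moreover have "inj_on vec_Inl_part ?C\<^sub>m"
    by (intro inj_on_inverseI[of _ vec_of_Inl]) auto
  ultimately show "inj_on \<psi> (max_complex_subspace \<Lambda>)"
    unfolding \<psi>_def by (metis comp_inj_on inj_on_subset max_complex_image subset_UNIV)
  have "\<psi> ` max_complex_subspace \<Lambda> = vec_Inl_part ` (inv \<phi> \<circ> vec_of_Inr) ` max_complex_subspace \<Lambda>"
    unfolding \<psi>_def by (rule image_comp[symmetric])
  also have "\<dots> = vec_Inl_part ` ?C\<^sub>m"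
    by (simp only: max_complex_image)
  finally show "\<psi> ` max_complex_subspace \<Lambda> = UNIV"
    by (simp add: image_image)
qed

theorem lemma2p2:
  fixes T :: "complex^'m^'m"
    and R1 R2 :: "real^'m^'k"
    and \<Lambda> :: "(complex^'r) set"
  assumes discrete: "discrete_subgroup (period_lattice T R1 R2)"
    and rank: "cspan_vec (period_lattice T R1 R2) = UNIV"
    and imT: "det (\<chi> i j. Im (T$i$j)) \<noteq> 0"
    and not_irr: "\<not> irrationality_condition (block_R R1 R2)"
    and decomp: "quotient_iso (period_lattice T R1 R2) (split_lattice \<Lambda> :: (complex^('q::finite + 'r)) set)"
    and tor: "toroidal \<Lambda>"
    and ab: "abelian_variety (torus_lattice T)"
  shows "quasi_abelian_kind0 \<Lambda>"
proof -
  obtain \<phi> :: "complex^('m + 'k) \<Rightarrow> complex^('q + 'r)"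
    where \<phi>: "bij \<phi>" "clinear_vec \<phi>" "\<phi> ` period_lattice T R1 R2 = split_lattice \<Lambda>"
    using decomp unfolding quotient_iso_def by blast
  show ?thesis
    using quasi_abelian_kind0_pullback[OF ab] decomposition_torus_projection[OF imT \<phi>] by blast
qed

end
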